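(* Let $I$ be a countable index set and let $\mathbf X=(X_i)_{i\in I}$ be a family of random elements, defined on a common probability space, taking values in a POP space $(\mathbb X,\preceq)$. Assume that for every finite $J\subset I$ the finite subfamily $X_J=(X_i)_{i\in J}$ is negatively associated. Then $\mathbf X$ is negatively associated. Likewise, if $X_J$ is positively associated for every finite $J\subset I$, then $\mathbf X$ is positively associated.
   Context: A POP space is a Polish space $\mathbb X$ with Borel $\sigma$-field $\mathcal X$, equipped with a partial order $\preceq$ that is closed, i.e. $\{(x,x'):x\preceq x'\}$ is closed in $\mathbb X^2$. For $J\subset I$ write $X_J=(X_i)_{i\in J}$, a random element of $\mathbb X^J$ (product topology and product Borel $\sigma$-field). $\mathbb X^J$ is ordered coordinatewise, and a function $f:\mathbb X^J\to\mathbb R$ is non-decreasing if $x\preceq y$ coordinatewise implies $f(x)\le f(y)$. A family $\mathbf X=(X_i)_{i\in I}$ is negatively associated (NA) if $\mathbb E[f(X_J)g(X_{I\setminus J})]\le \mathbb E[f(X_J)]\,\mathbb E[g(X_{I\setminus J})]$ for all $J\subset I$ and all bounded measurable non-decreasing $f:\mathbb X^J\to\mathbb R$, $g:\mathbb X^{I\setminus J}\to\mathbb R$. It is positively associated (PA) if $\mathbb E[f(X_J)g(X_J)]\ge \mathbb E[f(X_J)]\,\mathbb E[g(X_J)]$ for all $J\subset I$ and all bounded measurable non-decreasing $f,g:\mathbb X^J\to\mathbb R$. *)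

theory Defs
  imports "HOL-Probability.Probability"
begin

text \<open>A POP space: the ambient type is Polish (type class polish_space) and
  le is a partial order on it whose graph is closed in the product topology.\<close>
definition pop_order :: "('a::polish_space \<Rightarrow> 'a \<Rightarrow> bool) \<Rightarrow> bool" where
  "pop_order le \<longleftrightarrow>
     (\<forall>x. le x x) \<and> (\<forall>x y. le x y \<and> le y x \<longrightarrow> x = y) \<and>
     (\<forall>x y z. le x y \<and> le y z \<longrightarrow> le x z) \<and>
     closed {(x, y). le x y}"

definition bdd_mono_fun ::
  "('a \<Rightarrow> 'a \<Rightarrow> bool) \<Rightarrow> 'i set \<Rightarrow> (('i \<Rightarrow> 'a::topological_space) \<Rightarrow> real) \<Rightarrow> bool" where
  "bdd_mono_fun le J f \<longleftrightarrow>
     f \<in> borel_measurable (PiM J (\<lambda>_. borel)) \<and>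
     (\<exists>B. \<forall>x\<in>space (PiM J (\<lambda>_. borel)). \<bar>f x\<bar> \<le> B) \<and>
     (\<forall>x\<in>space (PiM J (\<lambda>_. borel)). \<forall>y\<in>space (PiM J (\<lambda>_. borel)).
        (\<forall>i\<in>J. le (x i) (y i)) \<longrightarrow> f x \<le> f y)"

definition subfam :: "('i \<Rightarrow> 'w \<Rightarrow> 'a) \<Rightarrow> 'i set \<Rightarrow> 'w \<Rightarrow> ('i \<Rightarrow> 'a)" where
  "subfam X J = (\<lambda>\<omega>. restrict (\<lambda>i. X i \<omega>) J)"

definition neg_assoc ::
  "'w measure \<Rightarrow> ('a \<Rightarrow> 'a \<Rightarrow> bool) \<Rightarrow> ('i \<Rightarrow> 'w \<Rightarrow> 'a::topological_space) \<Rightarrow> 'i set \<Rightarrow> bool" where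
  "neg_assoc M le X I \<longleftrightarrow>
     (\<forall>J f g. J \<subseteq> I \<and> bdd_mono_fun le J f \<and> bdd_mono_fun le (I - J) g \<longrightarrow>
        (\<integral>\<omega>. f (subfam X J \<omega>) * g (subfam X (I - J) \<omega>) \<partial>M)
          \<le> (\<integral>\<omega>. f (subfam X J \<omega>) \<partial>M) * (\<integral>\<omega>. g (subfam X (I - J) \<omega>) \<partial>M))"

definition pos_assoc ::
  "'w measure \<Rightarrow> ('a \<Rightarrow> 'a \<Rightarrow> bool) \<Rightarrow> ('i \<Rightarrow> 'w \<Rightarrow> 'a::topological_space) \<Rightarrow> 'i set \<Rightarrow> bool" where
  "pos_assoc M le X I \<longleftrightarrow>
     (\<forall>J f g. J \<subseteq> I \<and> bdd_mono_fun le J f \<and> bdd_mono_fun le J g \<longrightarrow>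
        (\<integral>\<omega>. f (subfam X J \<omega>) * g (subfam X J \<omega>) \<partial>M)
          \<ge> (\<integral>\<omega>. f (subfam X J \<omega>) \<partial>M) * (\<integral>\<omega>. g (subfam X J \<omega>) \<partial>M))"

end

theory Submission
  imports Defs
begin

text \<open>Bounded monotone functions of the whole (countable) family are \<open>L\<^sup>1\<close>-limits of bounded
  monotone functions of finitely many coordinates, and both association inequalities pass to
  such limits. A monotone \<open>f\<close> bounded by \<open>B\<close> is uniformly within \<open>\<delta>\<close> of the staircase
  \<open>-B + \<delta> \<Sum>\<^sub>k 1{f > -B + k\<delta>}\<close>, so it suffices to approximate a measurable up-set \<open>U\<close>.
  Transport the law to sequences via an enumeration of the index set and choose, by inner
  regularity, a compact \<open>K \<subseteq> U\<close> of almost full measure. The sets of points dominating some point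
  of \<open>K\<close> in the first \<open>n\<close> coordinates are closed up-sets depending on finitely many coordinates;
  since the order is closed and \<open>K\<close> compact they decrease to the up-closure of \<open>K\<close>, which lies
  between \<open>K\<close> and \<open>U\<close>.\<close>

lemma compact_coordinatewise_relation_limit:
  fixes K :: "(nat \<Rightarrow> 'a::metric_space) set" and L :: "('a \<times> 'a) set"
  assumes "compact K" "closed L" "\<And>j. k j \<in> K" "z \<longlonglongrightarrow> z0"
    and eventually_L: "\<And>m. m \<in> S \<Longrightarrow> \<forall>\<^sub>F j in sequentially. (k j m, z j m) \<in> L"
  shows "\<exists>k0\<in>K. \<forall>m\<in>S. (k0 m, z0 m) \<in> L"
proof -
  obtain k0 r where "k0 \<in> K" "strict_mono r" and lim_k: "(k \<circ> r) \<longlonglongrightarrow> k0"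
    using compact_imp_seq_compact[OF assms(1)] assms(3) by (metis seq_compactE)
  have "(k0 m, z0 m) \<in> L" if "m \<in> S" for m
  proof (rule Lim_in_closed_set[OF assms(2) _ trivial_limit_sequentially])
    have coord: "continuous_on UNIV (\<lambda>x::nat \<Rightarrow> 'a. x m)" by simp
    show "((\<lambda>j. (k (r j) m, z (r j) m)) \<longlongrightarrow> (k0 m, z0 m)) sequentially"
      using lim_k LIMSEQ_subseq_LIMSEQ[OF assms(4) \<open>strict_mono r\<close>]
      by (intro tendsto_Pair continuous_on_tendsto_compose[OF coord]) (auto simp: o_def)
    show "\<forall>\<^sub>F j in sequentially. (k (r j) m, z (r j) m) \<in> L"
      using eventually_subseq[OF \<open>strict_mono r\<close> eventually_L[OF that]] .
  qed
  with \<open>k0 \<in> K\<close> show ?thesis by blast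
qed

definition dominated_on :: "('i \<Rightarrow> 'a) set \<Rightarrow> ('a \<times> 'a) set \<Rightarrow> 'i set \<Rightarrow> ('i \<Rightarrow> 'a) set" where
  "dominated_on K L S = {z. \<exists>k\<in>K. \<forall>m\<in>S. (k m, z m) \<in> L}"

lemma closed_dominated_on:
  fixes K :: "(nat \<Rightarrow> 'a::metric_space) set"
  assumes "compact K" "closed L"
  shows "closed (dominated_on K L S)"
  unfolding closed_sequential_limits
proof (intro allI impI, elim conjE)
  fix z z0 assume "\<forall>j. z j \<in> dominated_on K L S" and "z \<longlonglongrightarrow> z0"
  then have "\<forall>j. \<exists>k\<in>K. \<forall>m\<in>S. (k m, z j m) \<in> L"
    unfolding dominated_on_def by blast
  then obtain k where "\<And>j. k j \<in> K" "\<And>j m. m \<in> S \<Longrightarrow> (k j m, z j m) \<in> L"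
    by (metis (no_types))
  then show "z0 \<in> dominated_on K L S"
    using compact_coordinatewise_relation_limit[OF assms, of k z z0 S] \<open>z \<longlonglongrightarrow> z0\<close>
    unfolding dominated_on_def by auto
qed

lemma decseq_dominated_on_lessThan: "decseq (\<lambda>n. dominated_on K L {..<n})"
  unfolding decseq_def dominated_on_def by (auto 0 4)

lemma Inter_dominated_on_lessThan:
  fixes K :: "(nat \<Rightarrow> 'a::metric_space) set"
  assumes "compact K" "closed L"
  shows "(\<Inter>n. dominated_on K L {..<n}) = dominated_on K L UNIV"
proof (intro equalityI subsetI)
  fix z assume "z \<in> (\<Inter>n. dominated_on K L {..<n})"
  then have "\<forall>j. \<exists>k\<in>K. \<forall>m<j. (k m, z m) \<in> L"
    unfolding dominated_on_def by blast
  then obtain k where "\<And>j. k j \<in> K" and k: "\<And>j m. m < j \<Longrightarrow> (k j m, z m) \<in> L"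
    by (metis (no_types))
  moreover have "\<forall>\<^sub>F j in sequentially. (k j m, z m) \<in> L" for m
    using eventually_gt_at_top[of m] by (rule eventually_mono) (rule k)
  ultimately have "\<exists>k0\<in>K. \<forall>m\<in>UNIV. (k0 m, z m) \<in> L"
    by (intro compact_coordinatewise_relation_limit[OF assms, of k "\<lambda>_. z"]) auto
  then show "z \<in> dominated_on K L UNIV"
    unfolding dominated_on_def by blast
qed (auto simp: dominated_on_def)

lemma finite_measure_inner_approx_compact:
  fixes \<nu> :: "'a::{second_countable_topology, complete_space} measure"
  assumes "finite_measure \<nu>" "sets \<nu> = sets borel" "B \<in> sets borel" "e > 0"
  obtains K where "compact K" "K \<subseteq> B" "measure \<nu> B < measure \<nu> K + e"
proof -
  interpret finite_measure \<nu> by (rule assms(1))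
  have "emeasure \<nu> B = (SUP K \<in> {K. K \<subseteq> B \<and> compact K}. emeasure \<nu> K)"
    using assms(2,3) by (intro inner_regular) auto
  show ?thesis
  proof (cases "measure \<nu> B < e")
    case True
    then show ?thesis using that[of "{}"] by simp
  next
    case False
    then have "ennreal (measure \<nu> B - e) < emeasure \<nu> B"
      using assms(4) by (simp add: emeasure_eq_measure ennreal_lessI)
    with \<open>emeasure \<nu> B = _\<close> obtain K where "K \<subseteq> B" "compact K" "ennreal (measure \<nu> B - e) < emeasure \<nu> K"
      by (auto simp: less_SUP_iff)
    then show ?thesis using that[of K] False by (simp add: emeasure_eq_measure ennreal_less_iff)
  qed
qed

lemma upset_approx_by_dominated_prefix:
  fixes \<nu> :: "(nat \<Rightarrow> 'a::polish_space) measure"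
  assumes "prob_space \<nu>" "sets \<nu> = sets borel" "W \<in> sets borel"
    and closed_le: "closed {(x, y). le x y}" and refl: "\<And>x. le x x"
    and up: "\<And>z z'. z \<in> W \<Longrightarrow> \<forall>m. le (z m) (z' m) \<Longrightarrow> z' \<in> W"
    and "\<epsilon> > 0"
  obtains K where "compact K"
    "\<forall>\<^sub>F n in sequentially. measure \<nu> (W - dominated_on K {(x, y). le x y} {..<n})
        + measure \<nu> (dominated_on K {(x, y). le x y} {..<n} - W) < \<epsilon>"
proof -
  interpret prob_space \<nu> by fact
  let ?L = "{(x, y). le x y}"
  obtain K where K: "compact K" "K \<subseteq> W" "measure \<nu> W < measure \<nu> K + \<epsilon>/2"
    using finite_measure_inner_approx_compact[OF finite_measure_axioms assms(2,3)] \<open>\<epsilon> > 0\<close>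
    by (metis half_gt_zero)
  define D where "D n = dominated_on K ?L {..<n}" for n
  define D_lim where "D_lim = dominated_on K ?L UNIV"
  have D_sets: "D n \<in> sets \<nu>" for n
    unfolding D_def assms(2) using closed_dominated_on[OF K(1) closed_le] by (rule borel_closed)
  have Inter_D: "(\<Inter>n. D n) = D_lim"
    unfolding D_def D_lim_def by (rule Inter_dominated_on_lessThan[OF K(1) closed_le])
  then have D_lim_sets: "D_lim \<in> sets \<nu>" and D_lim_sub: "D_lim \<subseteq> D n" for n
    using D_sets by auto
  have "K \<subseteq> D_lim" using refl unfolding D_lim_def dominated_on_def by auto
  have "D_lim \<subseteq> W" using up K(2) unfolding D_lim_def dominated_on_def by auto
  have "(\<lambda>n. measure \<nu> (D n)) \<longlonglongrightarrow> measure \<nu> D_lim"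
    unfolding Inter_D[symmetric] using D_sets decseq_dominated_on_lessThan
    by (intro finite_Lim_measure_decseq) (auto simp: D_def)
  then have "\<forall>\<^sub>F n in sequentially. measure \<nu> (D n) < measure \<nu> D_lim + \<epsilon>/2"
    by (rule order_tendstoD) (simp add: \<open>\<epsilon> > 0\<close>)
  moreover have "measure \<nu> (W - D n) + measure \<nu> (D n - W) < \<epsilon>"
    if "measure \<nu> (D n) < measure \<nu> D_lim + \<epsilon>/2" for n
  proof -
    have "measure \<nu> (W - D n) \<le> measure \<nu> (W - D_lim)"
      using D_lim_sub assms(2,3) D_lim_sets by (intro finite_measure_mono) auto
    also have "\<dots> = measure \<nu> W - measure \<nu> D_lim"
      using \<open>D_lim \<subseteq> W\<close> assms(2,3) D_lim_sets by (intro finite_measure_Diff) auto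
    also have "\<dots> \<le> measure \<nu> W - measure \<nu> K"
      using \<open>K \<subseteq> D_lim\<close> D_lim_sets by (simp add: finite_measure_mono)
    finally have "measure \<nu> (W - D n) < \<epsilon>/2" using K(3) by linarith
    moreover have "measure \<nu> (D n - W) \<le> measure \<nu> (D n - D_lim)"
      using \<open>D_lim \<subseteq> W\<close> D_sets D_lim_sets by (intro finite_measure_mono) auto
    moreover have "measure \<nu> (D n - D_lim) = measure \<nu> (D n) - measure \<nu> D_lim"
      using D_lim_sub D_sets D_lim_sets by (intro finite_measure_Diff) auto
    ultimately show ?thesis using that by linarith
  qed
  ultimately have "\<forall>\<^sub>F n in sequentially. measure \<nu> (W - D n) + measure \<nu> (D n - W) < \<epsilon>"
    by (rule eventually_mono)
  then show ?thesis using that[OF K(1)] unfolding D_def by blast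
qed

text \<open>The case split avoids the unspecified value \<open>from_nat_into {}\<close>.\<close>
definition enum_prefix :: "'i set \<Rightarrow> nat \<Rightarrow> 'i set" where
  "enum_prefix J n = (if J = {} then {} else from_nat_into J ` {..<n})"

lemma enum_prefix_subset: "enum_prefix J n \<subseteq> J"
  unfolding enum_prefix_def by (auto intro: from_nat_into)

lemma finite_enum_prefix: "finite (enum_prefix J n)"
  unfolding enum_prefix_def by auto

definition measurable_upset ::
  "('a \<Rightarrow> 'a \<Rightarrow> bool) \<Rightarrow> 'i set \<Rightarrow> ('i \<Rightarrow> 'a::topological_space) set \<Rightarrow> bool" where
  "measurable_upset le J U \<longleftrightarrow> U \<in> sets (PiM J (\<lambda>_. borel)) \<and>
     (\<forall>x\<in>U. \<forall>y\<in>space (PiM J (\<lambda>_. borel)). (\<forall>i\<in>J. le (x i) (y i)) \<longrightarrow> y \<in> U)"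

lemma measurable_upset_sets: "measurable_upset le J U \<Longrightarrow> U \<in> sets (PiM J (\<lambda>_. borel))"
  unfolding measurable_upset_def by blast

lemma measurable_subfam:
  assumes "\<And>i. i \<in> J \<Longrightarrow> X i \<in> borel_measurable M"
  shows "subfam X J \<in> measurable M (PiM J (\<lambda>_. borel))"
  unfolding subfam_def by (rule measurable_restrict) (use assms in simp)

lemma subfam_in_space: "subfam X J \<omega> \<in> space (PiM J (\<lambda>_. borel))"
  unfolding subfam_def space_PiM by auto

lemma measure_preimage_neq_le:
  assumes "finite_measure M" "Z \<in> measurable M N" "A \<in> sets N" "B \<in> sets N"
  shows "measure M {\<omega> \<in> space M. (Z \<omega> \<in> A) \<noteq> (Z \<omega> \<in> B)}
    \<le> measure (distr M N Z) (A - B) + measure (distr M N Z) (B - A)"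
proof -
  interpret finite_measure M by fact
  have "measure M {\<omega> \<in> space M. (Z \<omega> \<in> A) \<noteq> (Z \<omega> \<in> B)}
      \<le> measure M (Z -` (A - B) \<inter> space M \<union> Z -` (B - A) \<inter> space M)"
    using assms by (intro finite_measure_mono) auto
  also have "\<dots> \<le> measure M (Z -` (A - B) \<inter> space M) + measure M (Z -` (B - A) \<inter> space M)"
    using assms by (intro measure_Un_le) auto
  also have "\<dots> = measure (distr M N Z) (A - B) + measure (distr M N Z) (B - A)"
    using assms by (simp add: measure_distr)
  finally show ?thesis .
qed

lemma measurable_upset_dominated_prefix:
  fixes K :: "(nat \<Rightarrow> 'a::polish_space) set" and J :: "'i set"
  assumes "compact K" "closed {(x, y). le x y}" and trans: "\<And>x y z. le x y \<Longrightarrow> le y z \<Longrightarrow> le x z"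
    and "J \<noteq> {}"
  shows "measurable_upset le (enum_prefix J n) {y \<in> space (PiM (enum_prefix J n) (\<lambda>_. borel)).
    (\<lambda>m. y (from_nat_into J m)) \<in> dominated_on K {(x, y). le x y} {..<n}}"
    (is "measurable_upset le ?J' ?V")
proof -
  define e where "e = from_nat_into J"
  define D where "D = dominated_on K {(x, y). le x y} {..<n}"
  have J'_eq: "?J' = e ` {..<n}" unfolding enum_prefix_def e_def using \<open>J \<noteq> {}\<close> by simp
  \<comment> \<open>Only the coordinates \<open>m < n\<close> matter for \<open>D\<close>; the others are padded so that \<open>G\<close> is measurable.\<close>
  define G where "G y = (\<lambda>m. if m < n then y (e m) else undefined)" for y :: "'i \<Rightarrow> 'a"
  have G_meas: "G \<in> borel_measurable (PiM ?J' (\<lambda>_. borel))" unfolding G_def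
  proof (rule measurable_coordinatewise_then_product)
    fix m
    show "(\<lambda>y. if m < n then y (e m) else undefined) \<in> borel_measurable (PiM ?J' (\<lambda>_. borel))"
      by (cases "m < n") (auto simp: J'_eq)
  qed
  have "D \<in> sets borel"
    unfolding D_def using closed_dominated_on[OF assms(1,2)] by (rule borel_closed)
  with G_meas have "G -` D \<inter> space (PiM ?J' (\<lambda>_. borel)) \<in> sets (PiM ?J' (\<lambda>_. borel))"
    by (rule measurable_sets)
  moreover have "?V = G -` D \<inter> space (PiM ?J' (\<lambda>_. borel))"
    unfolding G_def D_def dominated_on_def e_def by auto
  ultimately have "?V \<in> sets (PiM ?J' (\<lambda>_. borel))" by simp
  moreover have "y' \<in> ?V" if "y \<in> ?V" "y' \<in> space (PiM ?J' (\<lambda>_. borel))" "\<forall>i\<in>?J'. le (y i) (y' i)"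
    for y y'
    using that unfolding dominated_on_def J'_eq e_def[symmetric] by (auto intro: trans)
  ultimately show ?thesis unfolding measurable_upset_def by blast
qed

lemma measurable_upset_vimage_to_nat_on:
  fixes U :: "('i \<Rightarrow> 'a::polish_space) set"
  assumes "measurable_upset le J U"
  shows "(\<lambda>z::nat \<Rightarrow> 'a. \<lambda>i\<in>J. z (to_nat_on J i)) -` U \<in> sets borel"
    and "z \<in> (\<lambda>z. \<lambda>i\<in>J. z (to_nat_on J i)) -` U \<Longrightarrow> \<forall>m. le (z m) (z' m) \<Longrightarrow>
      z' \<in> (\<lambda>z. \<lambda>i\<in>J. z (to_nat_on J i)) -` U"
proof -
  have "(\<lambda>z::nat \<Rightarrow> 'a. \<lambda>i\<in>J. z (to_nat_on J i)) \<in> measurable borel (PiM J (\<lambda>_. borel))"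
    by (intro measurable_restrict borel_measurable_continuous_onI) simp
  from measurable_sets[OF this measurable_upset_sets[OF assms]]
  show "(\<lambda>z::nat \<Rightarrow> 'a. \<lambda>i\<in>J. z (to_nat_on J i)) -` U \<in> sets borel" by simp
  show "z \<in> (\<lambda>z. \<lambda>i\<in>J. z (to_nat_on J i)) -` U \<Longrightarrow> \<forall>m. le (z m) (z' m) \<Longrightarrow>
      z' \<in> (\<lambda>z. \<lambda>i\<in>J. z (to_nat_on J i)) -` U"
    using assms unfolding measurable_upset_def by (auto simp: space_PiM)
qed

lemma measurable_upset_finite_approx:
  fixes M :: "'w measure" and le :: "'a::polish_space \<Rightarrow> 'a \<Rightarrow> bool" and X :: "'i \<Rightarrow> 'w \<Rightarrow> 'a"
  assumes "prob_space M" "pop_order le" "countable J"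
    and X: "\<And>i. i \<in> J \<Longrightarrow> X i \<in> borel_measurable M"
    and U: "measurable_upset le J U" and "\<epsilon> > 0"
  shows "\<forall>\<^sub>F n in sequentially. \<exists>V. measurable_upset le (enum_prefix J n) V \<and>
     measure M {\<omega> \<in> space M. (subfam X J \<omega> \<in> U) \<noteq> (subfam X (enum_prefix J n) \<omega> \<in> V)} < \<epsilon>"
proof (cases "J = {}")
  case True
  then show ?thesis using U \<open>\<epsilon> > 0\<close> by (auto simp: enum_prefix_def intro!: exI[of _ U])
next
  case False
  interpret prob_space M by fact
  have closed_le: "closed {(x, y). le x y}" and refl: "\<And>x. le x x"
    and trans: "\<And>x y z. le x y \<Longrightarrow> le y z \<Longrightarrow> le x z"
    using \<open>pop_order le\<close> unfolding pop_order_def by blast+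
  define e where "e = from_nat_into J"
  have e_in: "e m \<in> J" for m unfolding e_def using False by (rule from_nat_into)
  have e_to_nat_on: "e (to_nat_on J i) = i" if "i \<in> J" for i
    unfolding e_def using \<open>countable J\<close> that by simp
  define Z where "Z \<omega> = (\<lambda>m. X (e m) \<omega>)" for \<omega>
  have Z_meas: "Z \<in> borel_measurable M" unfolding Z_def
    by (rule measurable_coordinatewise_then_product) (simp add: X e_in)
  define W where "W = (\<lambda>z::nat \<Rightarrow> 'a. \<lambda>i\<in>J. z (to_nat_on J i)) -` U"
  have W_borel: "W \<in> sets borel" and W_up: "\<And>z z'. z \<in> W \<Longrightarrow> \<forall>m. le (z m) (z' m) \<Longrightarrow> z' \<in> W"
    unfolding W_def using measurable_upset_vimage_to_nat_on[OF U] by blast+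
  have U_iff_W: "subfam X J \<omega> \<in> U \<longleftrightarrow> Z \<omega> \<in> W" for \<omega>
  proof -
    have "subfam X J \<omega> = (\<lambda>i\<in>J. Z \<omega> (to_nat_on J i))"
      unfolding subfam_def Z_def by (auto simp: e_to_nat_on fun_eq_iff)
    then show ?thesis unfolding W_def by simp
  qed
  define \<nu> where "\<nu> = distr M borel Z"
  have "prob_space \<nu>" unfolding \<nu>_def by (rule prob_space_distr[OF Z_meas])
  then obtain K where "compact K" and small_diff: "\<forall>\<^sub>F n in sequentially.
      measure \<nu> (W - dominated_on K {(x, y). le x y} {..<n})
        + measure \<nu> (dominated_on K {(x, y). le x y} {..<n} - W) < \<epsilon>"
    using upset_approx_by_dominated_prefix[of \<nu> W le \<epsilon>] W_borel W_up closed_le refl \<open>\<epsilon> > 0\<close>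
    unfolding \<nu>_def by auto
  show ?thesis
  proof (rule eventually_mono[OF small_diff])
    fix n
    define D where "D = dominated_on K {(x, y). le x y} {..<n}"
    define J' where "J' = enum_prefix J n"
    define V where "V = {y \<in> space (PiM J' (\<lambda>_. borel)). (\<lambda>m. y (e m)) \<in> D}"
    have V_upset: "measurable_upset le J' V"
      unfolding V_def D_def J'_def e_def
      using measurable_upset_dominated_prefix[OF \<open>compact K\<close> closed_le trans False] .
    have D_borel: "D \<in> sets borel"
      unfolding D_def using closed_dominated_on[OF \<open>compact K\<close> closed_le] by (rule borel_closed)
    have "e m \<in> J'" if "m < n" for m
      using that False unfolding J'_def enum_prefix_def e_def by simp
    then have V_iff_D: "subfam X J' \<omega> \<in> V \<longleftrightarrow> Z \<omega> \<in> D" for \<omega>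
      using subfam_in_space[of X J' \<omega>] unfolding V_def D_def dominated_on_def Z_def subfam_def by auto
    have "measure M {\<omega> \<in> space M. (subfam X J \<omega> \<in> U) \<noteq> (subfam X J' \<omega> \<in> V)}
        \<le> measure \<nu> (W - D) + measure \<nu> (D - W)"
      unfolding U_iff_W V_iff_D \<nu>_def
      by (rule measure_preimage_neq_le[OF finite_measure_axioms Z_meas W_borel D_borel])
    then show "measure \<nu> (W - D) + measure \<nu> (D - W) < \<epsilon> \<Longrightarrow> \<exists>V. measurable_upset le J' V \<and>
        measure M {\<omega> \<in> space M. (subfam X J \<omega> \<in> U) \<noteq> (subfam X J' \<omega> \<in> V)} < \<epsilon>"
      using V_upset by auto
  qed
qed

lemma staircase_count_approx:
  fixes \<delta> s :: real and N :: nat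
  assumes "\<delta> > 0" "0 \<le> s" "s \<le> real N * \<delta>"
  shows "\<bar>s - \<delta> * (\<Sum>k\<in>{1..N}. if real k * \<delta> < s then 1 else 0)\<bar> \<le> \<delta>"
proof -
  define c where "c = \<lceil>s / \<delta>\<rceil>"
  have "0 \<le> s / \<delta>" using assms by simp
  then have "0 \<le> c" unfolding c_def by linarith
  have "c \<le> int N"
    unfolding c_def using assms by (simp add: ceiling_le_iff divide_le_eq mult.commute)
  have "real_of_int c - 1 < s / \<delta>" "s / \<delta> \<le> real_of_int c"
    unfolding c_def by linarith+
  then have c_bounds: "(real_of_int c - 1) * \<delta> < s" "s \<le> real_of_int c * \<delta>"
    using assms(1) by (simp_all add: pos_less_divide_eq pos_divide_le_eq)
  have below_iff: "real k * \<delta> < s \<longleftrightarrow> int k < c" for k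
    unfolding c_def less_ceiling_iff using assms(1) by (simp add: pos_less_divide_eq)
  have "{k\<in>{1..N}. real k * \<delta> < s} = {1..<nat c}"
    unfolding below_iff using \<open>0 \<le> c\<close> \<open>c \<le> int N\<close> by auto
  then have count: "(\<Sum>k\<in>{1..N}. if real k * \<delta> < s then 1 else (0::real)) = real (nat c - 1)"
    by (simp flip: sum.inter_filter)
  show ?thesis
  proof (cases "c = 0")
    case True
    then show ?thesis using count c_bounds assms by simp
  next
    case False
    then have "real (nat c - 1) = real_of_int c - 1" using \<open>0 \<le> c\<close> by (simp add: of_nat_diff)
    then show ?thesis unfolding count using c_bounds by (simp add: algebra_simps)
  qed
qed

lemma measurable_bdd_mono_fun_subfam:
  assumes "bdd_mono_fun le J f" "\<And>i. i \<in> J \<Longrightarrow> X i \<in> borel_measurable M"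
  shows "(\<lambda>\<omega>. f (subfam X J \<omega>)) \<in> borel_measurable M"
proof (rule measurable_compose[OF measurable_subfam[OF assms(2)]])
  show "f \<in> borel_measurable (PiM J (\<lambda>_. borel))"
    using assms(1) unfolding bdd_mono_fun_def by blast
qed

lemma abs_staircase_le:
  fixes N :: nat and B \<delta> :: real
  assumes "\<delta> \<ge> 0" "real N * \<delta> = 2 * B"
  shows "\<bar>- B + \<delta> * (\<Sum>k\<in>{1..N}. indicator (V k) y)\<bar> \<le> B"
proof -
  have "(\<Sum>k\<in>{1..N}. indicator (V k) y) \<le> (\<Sum>k\<in>{1..N}. 1::real)"
    by (intro sum_mono) (simp add: indicator_def)
  then have "0 \<le> \<delta> * (\<Sum>k\<in>{1..N}. indicator (V k) y)"
    "\<delta> * (\<Sum>k\<in>{1..N}. indicator (V k) y) \<le> \<delta> * real N"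
    using assms(1) by (simp_all add: sum_nonneg mult_left_mono)
  then show ?thesis using assms(2) by (simp add: mult.commute)
qed

lemma bdd_mono_fun_staircase:
  fixes N :: nat and B \<delta> :: real
  assumes "\<And>k. k \<in> {1..N} \<Longrightarrow> measurable_upset le J (V k)" "\<delta> \<ge> 0" "real N * \<delta> = 2 * B"
  shows "bdd_mono_fun le J (\<lambda>y. - B + \<delta> * (\<Sum>k\<in>{1..N}. indicator (V k) y))"
  unfolding bdd_mono_fun_def
proof (intro conjI ballI impI)
  show "(\<lambda>y. - B + \<delta> * (\<Sum>k\<in>{1..N}. indicator (V k) y)) \<in> borel_measurable (PiM J (\<lambda>_. borel))"
    using assms(1) unfolding measurable_upset_def
    by (intro borel_measurable_add borel_measurable_const borel_measurable_times
        borel_measurable_sum borel_measurable_indicator) auto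
  show "\<exists>C. \<forall>y\<in>space (PiM J (\<lambda>_. borel)). \<bar>- B + \<delta> * (\<Sum>k\<in>{1..N}. indicator (V k) y)\<bar> \<le> C"
    using abs_staircase_le[OF assms(2,3), of V] by blast
next
  fix x y assume "x \<in> space (PiM J (\<lambda>_. borel))" "y \<in> space (PiM J (\<lambda>_. borel))"
    and "\<forall>i\<in>J. le (x i) (y i)"
  then have "indicator (V k) x \<le> (indicator (V k) y :: real)" if "k \<in> {1..N}" for k
    using assms(1)[OF that] unfolding measurable_upset_def by (auto simp: indicator_def)
  then show "- B + \<delta> * (\<Sum>k\<in>{1..N}. indicator (V k) x) \<le> - B + \<delta> * (\<Sum>k\<in>{1..N}. indicator (V k) y)"
    using assms(2) by (intro add_left_mono mult_left_mono sum_mono) auto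
qed

lemma abs_diff_staircase_le:
  fixes t B \<delta> :: real and N :: nat and a :: "nat \<Rightarrow> real"
  assumes "\<delta> > 0" "real N * \<delta> = 2 * B" "\<bar>t\<bar> \<le> B"
  shows "\<bar>t - (- B + \<delta> * (\<Sum>k\<in>{1..N}. a k))\<bar>
    \<le> \<delta> + \<delta> * (\<Sum>k\<in>{1..N}. \<bar>(if - B + real k * \<delta> < t then 1 else 0) - a k\<bar>)"
proof -
  define s where "s = (\<Sum>k\<in>{1..N}. if - B + real k * \<delta> < t then 1 else (0::real))"
  have "s = (\<Sum>k\<in>{1..N}. if real k * \<delta> < t + B then 1 else 0)"
    unfolding s_def by (intro sum.cong) auto
  also have "\<bar>(t + B) - \<delta> * \<dots>\<bar> \<le> \<delta>"
    using assms by (intro staircase_count_approx) auto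
  finally have "\<bar>(t + B) - \<delta> * s\<bar> \<le> \<delta>" .
  moreover have "\<bar>\<delta> * s - \<delta> * (\<Sum>k\<in>{1..N}. a k)\<bar>
      \<le> \<delta> * (\<Sum>k\<in>{1..N}. \<bar>(if - B + real k * \<delta> < t then 1 else 0) - a k\<bar>)"
    unfolding s_def right_diff_distrib[symmetric] sum_subtractf[symmetric] abs_mult abs_of_pos[OF assms(1)]
    using assms(1) by (intro mult_left_mono sum_abs) auto
  ultimately show ?thesis by linarith
qed

lemma integral_abs_le_indicator_sum:
  fixes G :: "'w \<Rightarrow> real"
  assumes "prob_space M" "G \<in> borel_measurable M"
    and E: "\<And>k. k \<in> S \<Longrightarrow> E k \<in> sets M"
    and bound: "\<And>\<omega>. \<omega> \<in> space M \<Longrightarrow> \<bar>G \<omega>\<bar> \<le> c + c * (\<Sum>k\<in>S. indicator (E k) \<omega>)"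
  shows "(\<integral>\<omega>. \<bar>G \<omega>\<bar> \<partial>M) \<le> c + c * (\<Sum>k\<in>S. measure M (E k))"
proof -
  interpret prob_space M by fact
  have int_E: "integrable M (indicator (E k) :: 'w \<Rightarrow> real)" if "k \<in> S" for k
    using E[OF that] by (intro integrable_real_indicator) (auto simp: less_top[symmetric])
  then have int_sum: "integrable M (\<lambda>\<omega>. \<Sum>k\<in>S. indicator (E k) \<omega> :: real)"
    by (rule Bochner_Integration.integrable_sum)
  then have int_bound: "integrable M (\<lambda>\<omega>. c + c * (\<Sum>k\<in>S. indicator (E k) \<omega>))" by simp
  have "integrable M (\<lambda>\<omega>. \<bar>G \<omega>\<bar>)"
    using assms(2) bound
    by (intro Bochner_Integration.integrable_bound[OF int_bound] AE_I2) (auto intro: order.trans[OF _ abs_ge_self])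
  then have "(\<integral>\<omega>. \<bar>G \<omega>\<bar> \<partial>M) \<le> (\<integral>\<omega>. c + c * (\<Sum>k\<in>S. indicator (E k) \<omega>) \<partial>M)"
    using int_bound bound by (rule integral_mono)
  also have "\<dots> = c + c * (\<Sum>k\<in>S. measure M (E k))"
  proof -
    have "(\<integral>\<omega>. (\<Sum>k\<in>S. indicator (E k) \<omega>) \<partial>M) = (\<Sum>k\<in>S. measure M (E k))"
      using int_E E by (simp add: Bochner_Integration.integral_sum)
    then show ?thesis using int_sum by (simp add: prob_space)
  qed
  finally show ?thesis .
qed

lemma integral_abs_diff_staircase_le:
  fixes M :: "'w measure" and X :: "'i \<Rightarrow> 'w \<Rightarrow> 'a::topological_space" and N :: nat
  assumes "prob_space M"
    and X_J: "\<And>i. i \<in> J \<Longrightarrow> X i \<in> borel_measurable M"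
    and X_J': "\<And>i. i \<in> J' \<Longrightarrow> X i \<in> borel_measurable M"
    and f: "f \<in> borel_measurable (PiM J (\<lambda>_. borel))"
    and f_bound: "\<And>x. x \<in> space (PiM J (\<lambda>_. borel)) \<Longrightarrow> \<bar>f x\<bar> \<le> B"
    and "\<delta> > 0" "real N * \<delta> = 2 * B"
    and V: "\<And>k. k \<in> {1..N} \<Longrightarrow> V k \<in> sets (PiM J' (\<lambda>_. borel))"
    and close: "\<And>k. k \<in> {1..N} \<Longrightarrow>
      measure M {\<omega> \<in> space M. (- B + real k * \<delta> < f (subfam X J \<omega>)) \<noteq> (subfam X J' \<omega> \<in> V k)} \<le> \<eta>"
  shows "(\<integral>\<omega>. \<bar>f (subfam X J \<omega>) - (- B + \<delta> * (\<Sum>k\<in>{1..N}. indicator (V k) (subfam X J' \<omega>)))\<bar> \<partial>M)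
    \<le> \<delta> + \<delta> * (real N * \<eta>)"
proof -
  define F where "F \<omega> = f (subfam X J \<omega>)" for \<omega>
  define Y where "Y = subfam X J'"
  define h where "h y = - B + \<delta> * (\<Sum>k\<in>{1..N}. indicator (V k) y)" for y
  define E where "E k = {\<omega> \<in> space M. (- B + real k * \<delta> < F \<omega>) \<noteq> (Y \<omega> \<in> V k)}" for k
  have F_meas: "F \<in> borel_measurable M"
    unfolding F_def using measurable_subfam[OF X_J] f by (rule measurable_compose)
  have Y_meas: "Y \<in> measurable M (PiM J' (\<lambda>_. borel))"
    unfolding Y_def by (rule measurable_subfam[OF X_J'])
  have h_meas: "h \<in> borel_measurable (PiM J' (\<lambda>_. borel))"
    unfolding h_def using V
    by (intro borel_measurable_add borel_measurable_const borel_measurable_times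
        borel_measurable_sum borel_measurable_indicator) auto
  have E_sets: "E k \<in> sets M" if "k \<in> {1..N}" for k
  proof -
    have "F -` {- B + real k * \<delta> <..} \<inter> space M \<in> sets M" using F_meas by simp
    moreover have "Y -` V k \<inter> space M \<in> sets M" by (rule measurable_sets[OF Y_meas V[OF that]])
    moreover have "E k = ((F -` {- B + real k * \<delta> <..} \<inter> space M) - (Y -` V k \<inter> space M)) \<union>
        ((Y -` V k \<inter> space M) - (F -` {- B + real k * \<delta> <..} \<inter> space M))"
      unfolding E_def by auto
    ultimately show ?thesis by auto
  qed
  have pointwise: "\<bar>F \<omega> - h (Y \<omega>)\<bar> \<le> \<delta> + \<delta> * (\<Sum>k\<in>{1..N}. indicator (E k) \<omega>)" if "\<omega> \<in> space M" for \<omega>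
  proof -
    have ind_eq: "\<bar>(if - B + real k * \<delta> < F \<omega> then 1 else 0) - indicator (V k) (Y \<omega>)\<bar>
        = (indicator (E k) \<omega> :: real)" for k
      using that unfolding E_def by (auto simp: indicator_def)
    have "\<bar>F \<omega>\<bar> \<le> B" unfolding F_def by (rule f_bound[OF subfam_in_space])
    from abs_diff_staircase_le[OF assms(6,7) this, of "\<lambda>k. indicator (V k) (Y \<omega>)"]
    show ?thesis by (simp only: h_def ind_eq)
  qed
  have "(\<integral>\<omega>. \<bar>F \<omega> - h (Y \<omega>)\<bar> \<partial>M) \<le> \<delta> + \<delta> * (\<Sum>k\<in>{1..N}. measure M (E k))"
    using F_meas measurable_compose[OF Y_meas h_meas]
    by (intro integral_abs_le_indicator_sum[OF assms(1) _ E_sets pointwise]) measurable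
  also have "\<dots> \<le> \<delta> + \<delta> * (real N * \<eta>)"
    using close \<open>\<delta> > 0\<close> sum_mono[of "{1..N}" "\<lambda>k. measure M (E k)" "\<lambda>_. \<eta>"]
    unfolding E_def F_def Y_def by simp
  finally show ?thesis unfolding F_def Y_def h_def .
qed

lemma bdd_mono_fun_finite_approx:
  fixes M :: "'w measure" and le :: "'a::polish_space \<Rightarrow> 'a \<Rightarrow> bool" and X :: "'i \<Rightarrow> 'w \<Rightarrow> 'a"
  assumes "prob_space M" "pop_order le" "countable J"
    and X: "\<And>i. i \<in> J \<Longrightarrow> X i \<in> borel_measurable M"
    and f: "bdd_mono_fun le J f" and f_bound: "\<And>x. x \<in> space (PiM J (\<lambda>_. borel)) \<Longrightarrow> \<bar>f x\<bar> \<le> B"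
    and "B > 0" "\<epsilon> > 0"
  shows "\<forall>\<^sub>F n in sequentially. \<exists>h. bdd_mono_fun le (enum_prefix J n) h \<and> (\<forall>y. \<bar>h y\<bar> \<le> B) \<and>
     (\<integral>\<omega>. \<bar>f (subfam X J \<omega>) - h (subfam X (enum_prefix J n) \<omega>)\<bar> \<partial>M) < \<epsilon>"
proof -
  obtain N :: nat where N: "4 * B / \<epsilon> < real N" using reals_Archimedean2 by blast
  moreover have "0 < 4 * B / \<epsilon>" using \<open>B > 0\<close> \<open>\<epsilon> > 0\<close> by simp
  ultimately have "N > 0" by simp
  define \<delta> where "\<delta> = 2 * B / real N"
  define \<epsilon>' where "\<epsilon>' = \<epsilon> / (4 * B)"
  have "\<delta> > 0" "\<epsilon>' > 0" unfolding \<delta>_def \<epsilon>'_def using \<open>N > 0\<close> \<open>B > 0\<close> \<open>\<epsilon> > 0\<close> by simp_all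
  have N\<delta>: "real N * \<delta> = 2 * B" unfolding \<delta>_def using \<open>N > 0\<close> by simp
  have "\<delta> < \<epsilon> / 2" unfolding \<delta>_def using N \<open>N > 0\<close> \<open>\<epsilon> > 0\<close>
    by (simp add: divide_less_eq field_simps)
  have "\<delta> * (real N * \<epsilon>') = \<epsilon> / 2" unfolding \<epsilon>'_def using N\<delta> \<open>B > 0\<close> by (simp add: field_simps)
  define U where "U k = {x \<in> space (PiM J (\<lambda>_. borel)). - B + real k * \<delta> < f x}" for k :: nat
  have U_upset: "measurable_upset le J (U k)" for k
  proof -
    have "U k = f -` {- B + real k * \<delta> <..} \<inter> space (PiM J (\<lambda>_. borel))" unfolding U_def by auto
    then show ?thesis using f unfolding measurable_upset_def bdd_mono_fun_def U_def
      by (auto simp del: vimage_Int intro: order.strict_trans2)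
  qed
  have "\<forall>\<^sub>F n in sequentially. \<forall>k\<in>{1..N}. \<exists>V. measurable_upset le (enum_prefix J n) V \<and>
      measure M {\<omega> \<in> space M. (subfam X J \<omega> \<in> U k) \<noteq> (subfam X (enum_prefix J n) \<omega> \<in> V)} < \<epsilon>'"
    using measurable_upset_finite_approx[OF assms(1-3) X U_upset \<open>\<epsilon>' > 0\<close>]
    by (intro eventually_ball_finite) auto
  then show ?thesis
  proof (rule eventually_mono)
    fix n
    define J' where "J' = enum_prefix J n"
    assume "\<forall>k\<in>{1..N}. \<exists>V. measurable_upset le (enum_prefix J n) V \<and>
      measure M {\<omega> \<in> space M. (subfam X J \<omega> \<in> U k) \<noteq> (subfam X (enum_prefix J n) \<omega> \<in> V)} < \<epsilon>'"
    from bchoice[OF this] obtain V where V: "\<forall>k\<in>{1..N}. measurable_upset le J' (V k) \<and>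
        measure M {\<omega> \<in> space M. (subfam X J \<omega> \<in> U k) \<noteq> (subfam X J' \<omega> \<in> V k)} < \<epsilon>'"
      unfolding J'_def by blast
    then have V_upset: "\<And>k. k \<in> {1..N} \<Longrightarrow> measurable_upset le J' (V k)"
      and V_close: "\<And>k. k \<in> {1..N} \<Longrightarrow> measure M {\<omega> \<in> space M.
        (- B + real k * \<delta> < f (subfam X J \<omega>)) \<noteq> (subfam X J' \<omega> \<in> V k)} \<le> \<epsilon>'"
      unfolding U_def by (simp_all add: subfam_in_space less_imp_le)
    define h where "h y = - B + \<delta> * (\<Sum>k\<in>{1..N}. indicator (V k) y)" for y
    have h_mono: "bdd_mono_fun le J' h"
      unfolding h_def using V_upset \<open>\<delta> > 0\<close> N\<delta> by (intro bdd_mono_fun_staircase) auto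
    have h_bound: "\<bar>h y\<bar> \<le> B" for y
      unfolding h_def using \<open>\<delta> > 0\<close> N\<delta> by (intro abs_staircase_le) auto
    have "(\<integral>\<omega>. \<bar>f (subfam X J \<omega>) - h (subfam X J' \<omega>)\<bar> \<partial>M) \<le> \<delta> + \<delta> * (real N * \<epsilon>')"
      unfolding h_def
    proof (rule integral_abs_diff_staircase_le[OF assms(1) X _ _ f_bound \<open>\<delta> > 0\<close> N\<delta> _ V_close])
      show "X i \<in> borel_measurable M" if "i \<in> J'" for i
        using X that enum_prefix_subset[of J n] unfolding J'_def by auto
      show "f \<in> borel_measurable (PiM J (\<lambda>_. borel))" using f unfolding bdd_mono_fun_def by blast
      show "V k \<in> sets (PiM J' (\<lambda>_. borel))" if "k \<in> {1..N}" for k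
        by (rule measurable_upset_sets[OF V_upset[OF that]])
    qed
    then show "\<exists>h. bdd_mono_fun le J' h \<and> (\<forall>y. \<bar>h y\<bar> \<le> B) \<and>
        (\<integral>\<omega>. \<bar>f (subfam X J \<omega>) - h (subfam X J' \<omega>)\<bar> \<partial>M) < \<epsilon>"
      using h_mono h_bound \<open>\<delta> < \<epsilon> / 2\<close> \<open>\<delta> * (real N * \<epsilon>') = \<epsilon> / 2\<close> by auto
  qed
qed

lemma abs_mult_diff_le:
  fixes x y z w a b :: real
  assumes "\<bar>y\<bar> \<le> b" "\<bar>z\<bar> \<le> a"
  shows "\<bar>x * y - z * w\<bar> \<le> b * \<bar>x - z\<bar> + a * \<bar>y - w\<bar>"
proof -
  have "\<bar>x * y - z * w\<bar> = \<bar>(x - z) * y + z * (y - w)\<bar>" by (simp add: algebra_simps)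
  also have "\<dots> \<le> \<bar>x - z\<bar> * \<bar>y\<bar> + \<bar>z\<bar> * \<bar>y - w\<bar>" by (metis abs_mult abs_triangle_ineq)
  also have "\<dots> \<le> \<bar>x - z\<bar> * b + a * \<bar>y - w\<bar>"
    using assms by (intro add_mono mult_left_mono mult_right_mono) auto
  finally show ?thesis by (simp add: mult.commute)
qed

lemma abs_integral_diff_le:
  fixes U V :: "'w \<Rightarrow> real"
  assumes "integrable M U" "integrable M V"
  shows "\<bar>(\<integral>\<omega>. U \<omega> \<partial>M) - (\<integral>\<omega>. V \<omega> \<partial>M)\<bar> \<le> (\<integral>\<omega>. \<bar>U \<omega> - V \<omega>\<bar> \<partial>M)"
  using integral_norm_bound[of M "\<lambda>\<omega>. U \<omega> - V \<omega>"] assms by simp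

lemma abs_integral_le_bound:
  fixes U :: "'w \<Rightarrow> real"
  assumes "prob_space M" "integrable M U" "\<And>\<omega>. \<omega> \<in> space M \<Longrightarrow> \<bar>U \<omega>\<bar> \<le> c"
  shows "\<bar>\<integral>\<omega>. U \<omega> \<partial>M\<bar> \<le> c"
proof -
  interpret prob_space M by fact
  have "\<bar>\<integral>\<omega>. U \<omega> \<partial>M\<bar> \<le> (\<integral>\<omega>. \<bar>U \<omega>\<bar> \<partial>M)" using integral_norm_bound[of M U] by simp
  also have "\<dots> \<le> (\<integral>\<omega>. c \<partial>M)" using assms(2,3) by (intro integral_mono) auto
  finally show ?thesis by (simp add: prob_space)
qed

lemma abs_integral_mult_diff_le:
  fixes F G H K :: "'w \<Rightarrow> real"
  assumes "prob_space M"
    and "F \<in> borel_measurable M" "G \<in> borel_measurable M"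
    and "H \<in> borel_measurable M" "K \<in> borel_measurable M"
    and bounds: "\<And>\<omega>. \<omega> \<in> space M \<Longrightarrow> \<bar>F \<omega>\<bar> \<le> a \<and> \<bar>H \<omega>\<bar> \<le> a \<and> \<bar>G \<omega>\<bar> \<le> b \<and> \<bar>K \<omega>\<bar> \<le> b"
    and F_H: "(\<integral>\<omega>. \<bar>F \<omega> - H \<omega>\<bar> \<partial>M) \<le> \<eta>" and G_K: "(\<integral>\<omega>. \<bar>G \<omega> - K \<omega>\<bar> \<partial>M) \<le> \<eta>"
  shows "\<bar>(\<integral>\<omega>. F \<omega> * G \<omega> \<partial>M) - (\<integral>\<omega>. H \<omega> * K \<omega> \<partial>M)\<bar> \<le> (a + b) * \<eta>"
    and "\<bar>(\<integral>\<omega>. F \<omega> \<partial>M) * (\<integral>\<omega>. G \<omega> \<partial>M) - (\<integral>\<omega>. H \<omega> \<partial>M) * (\<integral>\<omega>. K \<omega> \<partial>M)\<bar> \<le> (a + b) * \<eta>"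
proof -
  interpret prob_space M by fact
  have bounded_integrable: "integrable M U"
    if "U \<in> borel_measurable M" "\<And>\<omega>. \<omega> \<in> space M \<Longrightarrow> \<bar>U \<omega>\<bar> \<le> c" for U :: "'w \<Rightarrow> real" and c
    using that by (intro integrable_const_bound[where B = c] AE_I2) auto
  have abs_mult_le: "\<bar>F \<omega> * G \<omega>\<bar> \<le> a * b" "\<bar>H \<omega> * K \<omega>\<bar> \<le> a * b" if "\<omega> \<in> space M" for \<omega>
    using bounds[OF that] unfolding abs_mult by (auto intro: mult_mono)
  have integrable: "integrable M F" "integrable M H" "integrable M G" "integrable M K"
    "integrable M (\<lambda>\<omega>. F \<omega> * G \<omega>)" "integrable M (\<lambda>\<omega>. H \<omega> * K \<omega>)"
    using bounded_integrable[OF assms(2), of a] bounded_integrable[OF assms(4), of a]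
      bounded_integrable[OF assms(3), of b] bounded_integrable[OF assms(5), of b]
      bounded_integrable[OF borel_measurable_times[OF assms(2,3)], of "a * b"]
      bounded_integrable[OF borel_measurable_times[OF assms(4,5)], of "a * b"]
      bounds abs_mult_le by blast+
  obtain \<omega>\<^sub>0 where "\<omega>\<^sub>0 \<in> space M" using not_empty by blast
  then have "0 \<le> a" "0 \<le> b" using bounds[of \<omega>\<^sub>0] by linarith+
  have "\<bar>(\<integral>\<omega>. F \<omega> * G \<omega> \<partial>M) - (\<integral>\<omega>. H \<omega> * K \<omega> \<partial>M)\<bar> \<le> (\<integral>\<omega>. \<bar>F \<omega> * G \<omega> - H \<omega> * K \<omega>\<bar> \<partial>M)"
    using integrable by (intro abs_integral_diff_le)
  also have "\<dots> \<le> (\<integral>\<omega>. b * \<bar>F \<omega> - H \<omega>\<bar> + a * \<bar>G \<omega> - K \<omega>\<bar> \<partial>M)"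
    using integrable bounds by (intro integral_mono abs_mult_diff_le) auto
  also have "\<dots> = b * (\<integral>\<omega>. \<bar>F \<omega> - H \<omega>\<bar> \<partial>M) + a * (\<integral>\<omega>. \<bar>G \<omega> - K \<omega>\<bar> \<partial>M)"
    using integrable by simp
  also have "\<dots> \<le> b * \<eta> + a * \<eta>"
    using F_H G_K \<open>0 \<le> a\<close> \<open>0 \<le> b\<close> by (intro add_mono mult_left_mono)
  finally show "\<bar>(\<integral>\<omega>. F \<omega> * G \<omega> \<partial>M) - (\<integral>\<omega>. H \<omega> * K \<omega> \<partial>M)\<bar> \<le> (a + b) * \<eta>"
    by (simp add: algebra_simps)
  have "\<bar>\<integral>\<omega>. G \<omega> \<partial>M\<bar> \<le> b" "\<bar>\<integral>\<omega>. H \<omega> \<partial>M\<bar> \<le> a"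
    using abs_integral_le_bound[OF assms(1) integrable(3), of b]
      abs_integral_le_bound[OF assms(1) integrable(2), of a] bounds by blast+
  then have "\<bar>(\<integral>\<omega>. F \<omega> \<partial>M) * (\<integral>\<omega>. G \<omega> \<partial>M) - (\<integral>\<omega>. H \<omega> \<partial>M) * (\<integral>\<omega>. K \<omega> \<partial>M)\<bar>
      \<le> b * \<bar>(\<integral>\<omega>. F \<omega> \<partial>M) - (\<integral>\<omega>. H \<omega> \<partial>M)\<bar> + a * \<bar>(\<integral>\<omega>. G \<omega> \<partial>M) - (\<integral>\<omega>. K \<omega> \<partial>M)\<bar>"
    by (rule abs_mult_diff_le)
  also have "\<dots> \<le> b * \<eta> + a * \<eta>"
    using abs_integral_diff_le[of M F H] abs_integral_diff_le[of M G K] integrable F_H G_K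
      \<open>0 \<le> a\<close> \<open>0 \<le> b\<close>
    by (intro add_mono mult_left_mono) auto
  finally show "\<bar>(\<integral>\<omega>. F \<omega> \<partial>M) * (\<integral>\<omega>. G \<omega> \<partial>M) - (\<integral>\<omega>. H \<omega> \<partial>M) * (\<integral>\<omega>. K \<omega> \<partial>M)\<bar>
      \<le> (a + b) * \<eta>"
    by (simp add: algebra_simps)
qed

lemma bdd_mono_fun_bound:
  assumes "bdd_mono_fun le J f"
  obtains B where "B > 0" "\<And>x. x \<in> space (PiM J (\<lambda>_. borel)) \<Longrightarrow> \<bar>f x\<bar> \<le> B"
proof -
  obtain B where "\<forall>x\<in>space (PiM J (\<lambda>_. borel)). \<bar>f x\<bar> \<le> B"
    using assms unfolding bdd_mono_fun_def by blast
  then show ?thesis using that[of "\<bar>B\<bar> + 1"] by force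
qed

lemma bdd_mono_fun_pair_finite_approx:
  fixes M :: "'w measure" and le :: "'a::polish_space \<Rightarrow> 'a \<Rightarrow> bool" and X :: "'i \<Rightarrow> 'w \<Rightarrow> 'a"
  assumes "prob_space M" "pop_order le" "countable J" "countable J'"
    and X: "\<And>i. i \<in> J \<union> J' \<Longrightarrow> X i \<in> borel_measurable M"
    and f: "bdd_mono_fun le J f" and g: "bdd_mono_fun le J' g" and "e > 0"
  obtains n h k where "bdd_mono_fun le (enum_prefix J n) h" "bdd_mono_fun le (enum_prefix J' n) k"
    "\<bar>(\<integral>\<omega>. f (subfam X J \<omega>) * g (subfam X J' \<omega>) \<partial>M)
      - (\<integral>\<omega>. h (subfam X (enum_prefix J n) \<omega>) * k (subfam X (enum_prefix J' n) \<omega>) \<partial>M)\<bar> \<le> e"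
    "\<bar>(\<integral>\<omega>. f (subfam X J \<omega>) \<partial>M) * (\<integral>\<omega>. g (subfam X J' \<omega>) \<partial>M)
      - (\<integral>\<omega>. h (subfam X (enum_prefix J n) \<omega>) \<partial>M) * (\<integral>\<omega>. k (subfam X (enum_prefix J' n) \<omega>) \<partial>M)\<bar> \<le> e"
proof -
  obtain Bf where "Bf > 0" and f_bound: "\<And>x. x \<in> space (PiM J (\<lambda>_. borel)) \<Longrightarrow> \<bar>f x\<bar> \<le> Bf"
    using bdd_mono_fun_bound[OF f] by blast
  obtain Bg where "Bg > 0" and g_bound: "\<And>x. x \<in> space (PiM J' (\<lambda>_. borel)) \<Longrightarrow> \<bar>g x\<bar> \<le> Bg"
    using bdd_mono_fun_bound[OF g] by blast
  define \<eta> where "\<eta> = e / (Bf + Bg)"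
  have "\<eta> > 0" and e_eq: "(Bf + Bg) * \<eta> = e"
    unfolding \<eta>_def using \<open>Bf > 0\<close> \<open>Bg > 0\<close> \<open>e > 0\<close> by simp_all
  have "\<forall>\<^sub>F n in sequentially.
      (\<exists>h. bdd_mono_fun le (enum_prefix J n) h \<and> (\<forall>y. \<bar>h y\<bar> \<le> Bf) \<and>
        (\<integral>\<omega>. \<bar>f (subfam X J \<omega>) - h (subfam X (enum_prefix J n) \<omega>)\<bar> \<partial>M) < \<eta>) \<and>
      (\<exists>k. bdd_mono_fun le (enum_prefix J' n) k \<and> (\<forall>y. \<bar>k y\<bar> \<le> Bg) \<and>
        (\<integral>\<omega>. \<bar>g (subfam X J' \<omega>) - k (subfam X (enum_prefix J' n) \<omega>)\<bar> \<partial>M) < \<eta>)"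
    using bdd_mono_fun_finite_approx[OF assms(1-3) _ f f_bound \<open>Bf > 0\<close> \<open>\<eta> > 0\<close>]
      bdd_mono_fun_finite_approx[OF assms(1,2,4) _ g g_bound \<open>Bg > 0\<close> \<open>\<eta> > 0\<close>] X
    by (intro eventually_conj) auto
  then obtain n h k where h: "bdd_mono_fun le (enum_prefix J n) h" "\<And>y. \<bar>h y\<bar> \<le> Bf"
      "(\<integral>\<omega>. \<bar>f (subfam X J \<omega>) - h (subfam X (enum_prefix J n) \<omega>)\<bar> \<partial>M) < \<eta>"
    and k: "bdd_mono_fun le (enum_prefix J' n) k" "\<And>y. \<bar>k y\<bar> \<le> Bg"
      "(\<integral>\<omega>. \<bar>g (subfam X J' \<omega>) - k (subfam X (enum_prefix J' n) \<omega>)\<bar> \<partial>M) < \<eta>"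
    by (auto dest: eventually_happens'[OF sequentially_bot])
  have "(\<lambda>\<omega>. f (subfam X J \<omega>)) \<in> borel_measurable M" "(\<lambda>\<omega>. g (subfam X J' \<omega>)) \<in> borel_measurable M"
    "(\<lambda>\<omega>. h (subfam X (enum_prefix J n) \<omega>)) \<in> borel_measurable M"
    "(\<lambda>\<omega>. k (subfam X (enum_prefix J' n) \<omega>)) \<in> borel_measurable M"
    using X enum_prefix_subset[of J n] enum_prefix_subset[of J' n]
    by (intro measurable_bdd_mono_fun_subfam[OF f] measurable_bdd_mono_fun_subfam[OF g]
        measurable_bdd_mono_fun_subfam[OF h(1)] measurable_bdd_mono_fun_subfam[OF k(1)]; blast)+
  note approx = abs_integral_mult_diff_le[where a = Bf and b = Bg and \<eta> = \<eta>, OF assms(1) this]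
  show ?thesis
  proof (rule that[OF h(1) k(1)])
    have bounds: "\<bar>f (subfam X J \<omega>)\<bar> \<le> Bf \<and> \<bar>h (subfam X (enum_prefix J n) \<omega>)\<bar> \<le> Bf \<and>
        \<bar>g (subfam X J' \<omega>)\<bar> \<le> Bg \<and> \<bar>k (subfam X (enum_prefix J' n) \<omega>)\<bar> \<le> Bg" for \<omega>
      using f_bound[OF subfam_in_space[of X J \<omega>]] g_bound[OF subfam_in_space[of X J' \<omega>]] h(2) k(2)
      by blast
    show "\<bar>(\<integral>\<omega>. f (subfam X J \<omega>) * g (subfam X J' \<omega>) \<partial>M)
      - (\<integral>\<omega>. h (subfam X (enum_prefix J n) \<omega>) * k (subfam X (enum_prefix J' n) \<omega>) \<partial>M)\<bar> \<le> e"
      and "\<bar>(\<integral>\<omega>. f (subfam X J \<omega>) \<partial>M) * (\<integral>\<omega>. g (subfam X J' \<omega>) \<partial>M)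
      - (\<integral>\<omega>. h (subfam X (enum_prefix J n) \<omega>) \<partial>M) * (\<integral>\<omega>. k (subfam X (enum_prefix J' n) \<omega>) \<partial>M)\<bar> \<le> e"
      using approx[OF bounds] h(3) k(3) unfolding e_eq by auto
  qed
qed

lemma neg_assocD:
  assumes "neg_assoc M le X I" "J \<subseteq> I" "bdd_mono_fun le J f" "bdd_mono_fun le (I - J) g"
  shows "(\<integral>\<omega>. f (subfam X J \<omega>) * g (subfam X (I - J) \<omega>) \<partial>M)
      \<le> (\<integral>\<omega>. f (subfam X J \<omega>) \<partial>M) * (\<integral>\<omega>. g (subfam X (I - J) \<omega>) \<partial>M)"
  using assms unfolding neg_assoc_def by blast

lemma pos_assocD:
  assumes "pos_assoc M le X I" "J \<subseteq> I" "bdd_mono_fun le J f" "bdd_mono_fun le J g"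
  shows "(\<integral>\<omega>. f (subfam X J \<omega>) \<partial>M) * (\<integral>\<omega>. g (subfam X J \<omega>) \<partial>M)
      \<le> (\<integral>\<omega>. f (subfam X J \<omega>) * g (subfam X J \<omega>) \<partial>M)"
  using assms unfolding pos_assoc_def by blast

lemma neg_assoc_of_finite_subfamilies:
  fixes M :: "'w measure" and le :: "'a::polish_space \<Rightarrow> 'a \<Rightarrow> bool" and X :: "'i \<Rightarrow> 'w \<Rightarrow> 'a"
  assumes "prob_space M" "pop_order le" "countable I"
    and X: "\<And>i. i \<in> I \<Longrightarrow> X i \<in> borel_measurable M"
    and finite_NA: "\<And>J. finite J \<Longrightarrow> J \<subseteq> I \<Longrightarrow> neg_assoc M le X J"
  shows "neg_assoc M le X I"
  unfolding neg_assoc_def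
proof (intro allI impI, elim conjE)
  fix J f g assume "J \<subseteq> I" and f: "bdd_mono_fun le J f" and g: "bdd_mono_fun le (I - J) g"
  show "(\<integral>\<omega>. f (subfam X J \<omega>) * g (subfam X (I - J) \<omega>) \<partial>M)
      \<le> (\<integral>\<omega>. f (subfam X J \<omega>) \<partial>M) * (\<integral>\<omega>. g (subfam X (I - J) \<omega>) \<partial>M)"
  proof (rule field_le_epsilon)
    fix e :: real assume "e > 0"
    have "countable J" "countable (I - J)" using \<open>countable I\<close> \<open>J \<subseteq> I\<close> countable_subset by blast+
    moreover have "\<And>i. i \<in> J \<union> (I - J) \<Longrightarrow> X i \<in> borel_measurable M" using X \<open>J \<subseteq> I\<close> by blast
    ultimately obtain n h k where h: "bdd_mono_fun le (enum_prefix J n) h"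
      and k: "bdd_mono_fun le (enum_prefix (I - J) n) k"
      and approx: "\<bar>(\<integral>\<omega>. f (subfam X J \<omega>) * g (subfam X (I - J) \<omega>) \<partial>M)
        - (\<integral>\<omega>. h (subfam X (enum_prefix J n) \<omega>) * k (subfam X (enum_prefix (I - J) n) \<omega>) \<partial>M)\<bar> \<le> e / 2"
        "\<bar>(\<integral>\<omega>. f (subfam X J \<omega>) \<partial>M) * (\<integral>\<omega>. g (subfam X (I - J) \<omega>) \<partial>M)
        - (\<integral>\<omega>. h (subfam X (enum_prefix J n) \<omega>) \<partial>M) * (\<integral>\<omega>. k (subfam X (enum_prefix (I - J) n) \<omega>) \<partial>M)\<bar> \<le> e / 2"
      by (rule bdd_mono_fun_pair_finite_approx[OF assms(1,2) _ _ _ f g half_gt_zero[OF \<open>e > 0\<close>]])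
    define J\<^sub>0 where "J\<^sub>0 = enum_prefix J n \<union> enum_prefix (I - J) n"
    have complement: "J\<^sub>0 - enum_prefix J n = enum_prefix (I - J) n"
      unfolding J\<^sub>0_def using enum_prefix_subset[of J n] enum_prefix_subset[of "I - J" n] by auto
    have "finite J\<^sub>0" "J\<^sub>0 \<subseteq> I"
      unfolding J\<^sub>0_def using finite_enum_prefix enum_prefix_subset[of J n] enum_prefix_subset[of "I - J" n]
        \<open>J \<subseteq> I\<close> by auto
    then have "neg_assoc M le X J\<^sub>0" by (rule finite_NA)
    from neg_assocD[OF this _ h, of k] k
    have "(\<integral>\<omega>. h (subfam X (enum_prefix J n) \<omega>) * k (subfam X (enum_prefix (I - J) n) \<omega>) \<partial>M)
        \<le> (\<integral>\<omega>. h (subfam X (enum_prefix J n) \<omega>) \<partial>M) * (\<integral>\<omega>. k (subfam X (enum_prefix (I - J) n) \<omega>) \<partial>M)"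
      unfolding complement by (simp add: J\<^sub>0_def)
    then show "(\<integral>\<omega>. f (subfam X J \<omega>) * g (subfam X (I - J) \<omega>) \<partial>M)
        \<le> (\<integral>\<omega>. f (subfam X J \<omega>) \<partial>M) * (\<integral>\<omega>. g (subfam X (I - J) \<omega>) \<partial>M) + e"
      using approx by linarith
  qed
qed

lemma pos_assoc_of_finite_subfamilies:
  fixes M :: "'w measure" and le :: "'a::polish_space \<Rightarrow> 'a \<Rightarrow> bool" and X :: "'i \<Rightarrow> 'w \<Rightarrow> 'a"
  assumes "prob_space M" "pop_order le" "countable I"
    and X: "\<And>i. i \<in> I \<Longrightarrow> X i \<in> borel_measurable M"
    and finite_PA: "\<And>J. finite J \<Longrightarrow> J \<subseteq> I \<Longrightarrow> pos_assoc M le X J"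
  shows "pos_assoc M le X I"
  unfolding pos_assoc_def
proof (intro allI impI, elim conjE)
  fix J f g assume "J \<subseteq> I" and f: "bdd_mono_fun le J f" and g: "bdd_mono_fun le J g"
  show "(\<integral>\<omega>. f (subfam X J \<omega>) \<partial>M) * (\<integral>\<omega>. g (subfam X J \<omega>) \<partial>M)
      \<le> (\<integral>\<omega>. f (subfam X J \<omega>) * g (subfam X J \<omega>) \<partial>M)"
  proof (rule field_le_epsilon)
    fix e :: real assume "e > 0"
    have "countable J" using \<open>countable I\<close> \<open>J \<subseteq> I\<close> countable_subset by blast
    moreover note \<open>countable J\<close>
    moreover have "\<And>i. i \<in> J \<union> J \<Longrightarrow> X i \<in> borel_measurable M" using X \<open>J \<subseteq> I\<close> by blast
    ultimately obtain n h k where h: "bdd_mono_fun le (enum_prefix J n) h"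
      and k: "bdd_mono_fun le (enum_prefix J n) k"
      and approx: "\<bar>(\<integral>\<omega>. f (subfam X J \<omega>) * g (subfam X J \<omega>) \<partial>M)
        - (\<integral>\<omega>. h (subfam X (enum_prefix J n) \<omega>) * k (subfam X (enum_prefix J n) \<omega>) \<partial>M)\<bar> \<le> e / 2"
        "\<bar>(\<integral>\<omega>. f (subfam X J \<omega>) \<partial>M) * (\<integral>\<omega>. g (subfam X J \<omega>) \<partial>M)
        - (\<integral>\<omega>. h (subfam X (enum_prefix J n) \<omega>) \<partial>M) * (\<integral>\<omega>. k (subfam X (enum_prefix J n) \<omega>) \<partial>M)\<bar> \<le> e / 2"
      by (rule bdd_mono_fun_pair_finite_approx[OF assms(1,2) _ _ _ f g half_gt_zero[OF \<open>e > 0\<close>]])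
    have "finite (enum_prefix J n)" "enum_prefix J n \<subseteq> I"
      using finite_enum_prefix enum_prefix_subset[of J n] \<open>J \<subseteq> I\<close> by auto
    then have "pos_assoc M le X (enum_prefix J n)" by (rule finite_PA)
    from pos_assocD[OF this subset_refl h k]
    have "(\<integral>\<omega>. h (subfam X (enum_prefix J n) \<omega>) \<partial>M) * (\<integral>\<omega>. k (subfam X (enum_prefix J n) \<omega>) \<partial>M)
        \<le> (\<integral>\<omega>. h (subfam X (enum_prefix J n) \<omega>) * k (subfam X (enum_prefix J n) \<omega>) \<partial>M)" .
    then show "(\<integral>\<omega>. f (subfam X J \<omega>) \<partial>M) * (\<integral>\<omega>. g (subfam X J \<omega>) \<partial>M)
        \<le> (\<integral>\<omega>. f (subfam X J \<omega>) * g (subfam X J \<omega>) \<partial>M) + e"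
      using approx by linarith
  qed
qed

theorem theorem3p3:
  fixes M :: "'w measure" and le :: "'a::polish_space \<Rightarrow> 'a \<Rightarrow> bool"
    and X :: "'i \<Rightarrow> 'w \<Rightarrow> 'a" and I :: "'i set"
  assumes "prob_space M"
    and "pop_order le"
    and "countable I"
    and "\<And>i. i \<in> I \<Longrightarrow> X i \<in> measurable M borel"
  shows "((\<forall>J. finite J \<and> J \<subseteq> I \<longrightarrow> neg_assoc M le X J) \<longrightarrow> neg_assoc M le X I) \<and>
         ((\<forall>J. finite J \<and> J \<subseteq> I \<longrightarrow> pos_assoc M le X J) \<longrightarrow> pos_assoc M le X I)"
proof (intro conjI impI)
  assume finite_NA: "\<forall>J. finite J \<and> J \<subseteq> I \<longrightarrow> neg_assoc M le X J"
  show "neg_assoc M le X I"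
    using assms(4) finite_NA by (intro neg_assoc_of_finite_subfamilies[OF assms(1-3)]) blast+
next
  assume finite_PA: "\<forall>J. finite J \<and> J \<subseteq> I \<longrightarrow> pos_assoc M le X J"
  show "pos_assoc M le X I"
    using assms(4) finite_PA by (intro pos_assoc_of_finite_subfamilies[OF assms(1-3)]) blast+
qed

end
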